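(* For every $n\ge0$ the maps $L,R:\mathcal{Y}_n\to\mathcal{Q}_n$, $C:\mathcal{Q}_n\to\mathcal{Y}_n$, $\lambda,\rho:\mathfrak{S}_n\to\mathcal{Y}_n$, $\gamma:\mathcal{Y}_n\to\mathfrak{S}_n$, $\mathrm{Des},\mathrm{GDes}:\mathfrak{S}_n\to\mathcal{Q}_n$ and $Z:\mathcal{Q}_n\to\mathfrak{S}_n$ are order-preserving and satisfy $L\circ\lambda=\mathrm{Des}$, $\gamma\circ C=Z$ and $R\circ\rho=\mathrm{GDes}$. Moreover, each pair $(\lambda,\gamma)$, $(L,C)$, $(\mathrm{Des},Z)$, $(\gamma,\rho)$, $(C,R)$, $(Z,\mathrm{GDes})$ is a Galois connection with the first map left adjoint to the second; that is, for all $\sigma\in\mathfrak{S}_n$, $t\in\mathcal{Y}_n$, $\mathsf{S}\in\mathcal{Q}_n$: $\lambda(\sigma)\le t\iff\sigma\le\gamma(t)$; $L(t)\subseteq\mathsf{S}\iff t\le C(\mathsf{S})$; $\mathrm{Des}(\sigma)\subseteq\mathsf{S}\iff\sigma\le Z(\mathsf{S})$; $\gamma(t)\le\sigma\iff t\le\rho(\sigma)$; $C(\mathsf{S})\le t\iff\mathsf{S}\subseteq R(t)$; $Z(\mathsf{S})\le\sigma\iff\mathsf{S}\subseteq\mathrm{GDes}(\sigma)$.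
   Context: $\mathcal{Q}_n$ is the Boolean poset of subsets of $[n-1]$ under inclusion. $\mathfrak{S}_n$ carries the weak order: $\sigma\le\tau$ iff $\mathrm{Inv}(\sigma)\subseteq\mathrm{Inv}(\tau)$, $\mathrm{Inv}(\sigma)=\{(i,j):i<j,\sigma(i)>\sigma(j)\}$. Permutations in one-line notation; $\mathrm{st}(a_1,\dots,a_p)$ is the permutation with the same relative order as distinct integers $a_i$; $\mathrm{id}_n$ identity, $\mathrm{id}_0$ empty. For $\sigma\in\mathfrak{S}_p,\tau\in\mathfrak{S}_q$: $\sigma\vee\tau=(\sigma(1)+q,\dots,\sigma(p)+q,p+q+1,\tau(1),\dots,\tau(q))$, $\sigma\backslash\tau=(\sigma(1)+q,\dots,\sigma(p)+q,\tau(1),\dots,\tau(q))$. $\mathrm{Des}(\sigma)=\{i\in[n-1]:\sigma(i)>\sigma(i+1)\}$; $\mathrm{GDes}(\sigma)=\{p\in[n-1]:\sigma=\alpha\backslash\beta,\ \alpha\in\mathfrak{S}_p\}$ (global descents). For $\mathsf{S}=\{p_1<\dots<p_k\}$, $Z(\mathsf{S})=\mathrm{id}_{p_1}\backslash\mathrm{id}_{p_2-p_1}\backslash\cdots\backslash\mathrm{id}_{n-p_k}$. Trees: $\mathcal{Y}_n$ = rooted planar binary trees with $n$ internal nodes, $\mathcal{Y}_0=\{|\}$; $s\vee t$ = tree whose root has left subtree $s$ and right subtree $t$; $t=t_l\vee t_r$ uniquely for $t\ne|$. Tamari order on $\mathcal{Y}_n$: generated by replacing a subtree $(a\vee b)\vee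 c$ by the larger $a\vee(b\vee c)$. $s\backslash t$: $|\backslash t=t$, $s\backslash t=s_l\vee(s_r\backslash t)$. $1_0=|$, $1_n=1_{n-1}\vee|$. $C(\mathsf{S})=1_{p_1}\backslash1_{p_2-p_1}\backslash\cdots\backslash1_{n-p_k}$. Numbering the leaves of $t$ by $0,\dots,n$ left to right, $L(t)=\{i\in[n-1]:\text{leaf } i\text{ is a left child}\}$. $R(t)=\{j\in[n-1]:t=r\backslash r'\text{ for some } r\in\mathcal{Y}_j\}$. $\lambda$: $\lambda(\mathrm{id}_0)=|$; for $n\ge1$, $j=\sigma^{-1}(n)$, $\lambda(\sigma)=\lambda(\mathrm{st}(\sigma(1),..,\sigma(j-1)))\vee\lambda(\mathrm{st}(\sigma(j+1),..,\sigma(n)))$. $\gamma$: $\gamma(|)=\mathrm{id}_0$, $\gamma(t)=\gamma(t_l)\vee\gamma(t_r)$. $\rho$: $\rho(\mathrm{id}_0)=|$; for $n\ge1$ let $j$ be the smallest element of $\mathrm{GDes}(\sigma)$, or $j=n$ if $\mathrm{GDes}(\sigma)=\emptyset$; then $\rho(\sigma)=\rho(\mathrm{st}(\sigma(1),\dots,\sigma(j-1)))\vee\rho(\mathrm{st}(\sigma(j+1),\dots,\sigma(n)))$. *)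

theory Defs
  imports Main
begin

definition perms :: "nat \<Rightarrow> nat list set" where
  "perms n = {\<sigma>. distinct \<sigma> \<and> set \<sigma> = {1..n}}"

definition idp :: "nat \<Rightarrow> nat list" where
  "idp n = [1..<n+1]"

definition Inv :: "nat list \<Rightarrow> (nat \<times> nat) set" where
  "Inv \<sigma> = {(i,j). 1 \<le> i \<and> i < j \<and> j \<le> length \<sigma> \<and> \<sigma> ! (i-1) > \<sigma> ! (j-1)}"

definition weak_le :: "nat list \<Rightarrow> nat list \<Rightarrow> bool" where
  "weak_le \<sigma> \<tau> \<longleftrightarrow> Inv \<sigma> \<subseteq> Inv \<tau>"

definition st :: "nat list \<Rightarrow> nat list" where
  "st xs = map (\<lambda>a. card {b \<in> set xs. b \<le> a}) xs"

definition pvee :: "nat list \<Rightarrow> nat list \<Rightarrow> nat list" where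
  "pvee \<sigma> \<tau> = map (\<lambda>a. a + length \<tau>) \<sigma> @ [length \<sigma> + length \<tau> + 1] @ \<tau>"

definition pbs :: "nat list \<Rightarrow> nat list \<Rightarrow> nat list" where
  "pbs \<sigma> \<tau> = map (\<lambda>a. a + length \<tau>) \<sigma> @ \<tau>"

definition Des :: "nat list \<Rightarrow> nat set" where
  "Des \<sigma> = {i. 1 \<le> i \<and> i < length \<sigma> \<and> \<sigma> ! (i-1) > \<sigma> ! i}"

definition GDes :: "nat list \<Rightarrow> nat set" where
  "GDes \<sigma> = {p. 1 \<le> p \<and> p < length \<sigma> \<and>
      (\<exists>\<alpha> \<beta>. \<alpha> \<in> perms p \<and> \<beta> \<in> perms (length \<sigma> - p) \<and> \<sigma> = pbs \<alpha> \<beta>)}"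

definition blocks :: "nat \<Rightarrow> nat set \<Rightarrow> nat list" where
  "blocks n S = (let ps = sorted_list_of_set S in
      map (\<lambda>(a,b). a - b) (zip (ps @ [n]) (0 # ps)))"

definition Z :: "nat \<Rightarrow> nat set \<Rightarrow> nat list" where
  "Z n S = foldr pbs (map idp (blocks n S)) []"

datatype tree = Lf | Nd tree tree

fun nodes :: "tree \<Rightarrow> nat" where
  "nodes Lf = 0"
| "nodes (Nd l r) = Suc (nodes l + nodes r)"

definition Y :: "nat \<Rightarrow> tree set" where
  "Y n = {t. nodes t = n}"

inductive tam_step :: "tree \<Rightarrow> tree \<Rightarrow> bool" where
  rot: "tam_step (Nd (Nd a b) c) (Nd a (Nd b c))"
| left: "tam_step s s' \<Longrightarrow> tam_step (Nd s t) (Nd s' t)"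
| right: "tam_step t t' \<Longrightarrow> tam_step (Nd s t) (Nd s t')"

definition tamari_le :: "tree \<Rightarrow> tree \<Rightarrow> bool" where
  "tamari_le = tam_step\<^sup>*\<^sup>*"

fun tbs :: "tree \<Rightarrow> tree \<Rightarrow> tree" where
  "tbs Lf t = t"
| "tbs (Nd l r) t = Nd l (tbs r t)"

fun one :: "nat \<Rightarrow> tree" where
  "one 0 = Lf"
| "one (Suc n) = Nd (one n) Lf"

definition C :: "nat \<Rightarrow> nat set \<Rightarrow> tree" where
  "C n S = foldr tbs (map one (blocks n S)) Lf"

text \<open>For each leaf (left to right), whether it is a left child; the flag says
  whether the current subtree is a left child.\<close>
fun leafdirs :: "bool \<Rightarrow> tree \<Rightarrow> bool list" where
  "leafdirs b Lf = [b]"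
| "leafdirs b (Nd l r) = leafdirs True l @ leafdirs False r"

definition L :: "tree \<Rightarrow> nat set" where
  "L t = {i. 1 \<le> i \<and> i < nodes t \<and> leafdirs False t ! i}"

definition R :: "tree \<Rightarrow> nat set" where
  "R t = {j. 1 \<le> j \<and> j < nodes t \<and> (\<exists>r r'. nodes r = j \<and> t = tbs r r')}"

fun gam :: "tree \<Rightarrow> nat list" where
  "gam Lf = []"
| "gam (Nd l r) = pvee (gam l) (gam r)"

text \<open>Recursion with a fuel argument (the length), which suffices on permutations.\<close>
fun lamf :: "nat \<Rightarrow> nat list \<Rightarrow> tree" where
  "lamf 0 \<sigma> = Lf"
| "lamf (Suc m) \<sigma> = (if \<sigma> = [] then Lf else
     (let j = length (takeWhile (\<lambda>a. a \<noteq> length \<sigma>) \<sigma>) + 1 in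
      Nd (lamf m (st (take (j-1) \<sigma>))) (lamf m (st (drop j \<sigma>)))))"

definition lam :: "nat list \<Rightarrow> tree" where
  "lam \<sigma> = lamf (length \<sigma>) \<sigma>"

fun rhof :: "nat \<Rightarrow> nat list \<Rightarrow> tree" where
  "rhof 0 \<sigma> = Lf"
| "rhof (Suc m) \<sigma> = (if \<sigma> = [] then Lf else
     (let j = (if GDes \<sigma> = {} then length \<sigma> else Min (GDes \<sigma>)) in
      Nd (rhof m (st (take (j-1) \<sigma>))) (rhof m (st (drop j \<sigma>)))))"

definition rho :: "nat list \<Rightarrow> tree" where
  "rho \<sigma> = rhof (length \<sigma>) \<sigma>"

definition Q :: "nat \<Rightarrow> nat set set" where
  "Q n = Pow {1..n-1}"

end

theory Submission
  imports Defs
begin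

(* The map gam is an order embedding of the Tamari order into the weak order: for trees of the
   same size, s <= t iff Inv (gam s) is contained in Inv (gam t). The inversion set of lam sigma
   is the left closure of Inv sigma, and that of rho sigma is the largest tree inversion set
   contained in Inv sigma; since tree inversion sets are left closed, this gives lam -| gam -| rho.
   The inversions of Z S are the pairs of positions separated by S, which gives Des -| Z -| GDes,
   and because L = Des o gam, R = GDes o gam and gam o C = Z these transport to L -| C -| R.
   Monotonicity of all maps is a formal consequence of the adjunctions, and L o lam = Des,
   R o rho = GDes follow from uniqueness of adjoints. *)

section \<open>Permutations and inversion sets\<close>

lemma perms_length: "\<sigma> \<in> perms n \<Longrightarrow> length \<sigma> = n"
  unfolding perms_def using distinct_card[of \<sigma>] by force

lemma perms_nth_bounds: "\<sigma> \<in> perms n \<Longrightarrow> k < n \<Longrightarrow> 1 \<le> \<sigma> ! k \<and> \<sigma> ! k \<le> n"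
  using nth_mem[of k \<sigma>] perms_length[of \<sigma> n] unfolding perms_def by auto

lemma mem_Inv_iff:
  "(i, j) \<in> Inv xs \<longleftrightarrow> 1 \<le> i \<and> i < j \<and> j \<le> length xs \<and> xs ! (i-1) > xs ! (j-1)"
  by (simp add: Inv_def)

lemma Inv_Nil [simp]: "Inv [] = {}"
  by (auto simp: mem_Inv_iff)

lemma Inv_cotrans: "(x, z) \<in> Inv xs \<Longrightarrow> x < y \<Longrightarrow> y < z \<Longrightarrow> (x, y) \<in> Inv xs \<or> (y, z) \<in> Inv xs"
  by (auto simp: mem_Inv_iff)

lemma mem_Inv_take_iff: "(i, j) \<in> Inv (take k xs) \<longleftrightarrow> (i, j) \<in> Inv xs \<and> j \<le> k"
  by (auto simp: mem_Inv_iff)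

lemma mem_Inv_drop_iff: "(i, j) \<in> Inv (drop k xs) \<longleftrightarrow> 1 \<le> i \<and> (i + k, j + k) \<in> Inv xs"
proof (cases "1 \<le> i \<and> i < j")
  case True
  then have "k + (i - 1) = i + k - 1" "k + (j - 1) = j + k - 1" by auto
  with True show ?thesis by (auto simp: mem_Inv_iff)
qed (auto simp: mem_Inv_iff)

lemma Inv_map_strict_mono:
  fixes f :: "nat \<Rightarrow> nat"
  assumes "strict_mono_on (set xs) f"
  shows "Inv (map f xs) = Inv xs"
proof -
  have "f (xs ! a) < f (xs ! b) \<longleftrightarrow> xs ! a < xs ! b" if "a < length xs" "b < length xs" for a b
    using strict_mono_on_less[OF assms] that by simp
  then show ?thesis
    by (auto simp: mem_Inv_iff)
qed

lemma rank_strict_mono: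
  fixes xs :: "nat list"
  shows "strict_mono_on (set xs) (\<lambda>a. card {b \<in> set xs. b \<le> a})"
proof (rule strict_mono_onI)
  fix a b :: nat
  assume "b \<in> set xs" "a < b"
  then have "{c \<in> set xs. c \<le> a} \<subset> {c \<in> set xs. c \<le> b}" by force
  then show "card {c \<in> set xs. c \<le> a} < card {c \<in> set xs. c \<le> b}"
    by (simp add: psubset_card_mono)
qed

lemma Inv_st [simp]: "Inv (st xs) = Inv xs"
  unfolding st_def by (rule Inv_map_strict_mono[OF rank_strict_mono])

lemma length_st [simp]: "length (st xs) = length xs"
  by (simp add: st_def)

lemma st_in_perms:
  assumes "distinct xs"
  shows "st xs \<in> perms (length xs)"
proof -
  let ?rank = "\<lambda>a. card {b \<in> set xs. b \<le> a}"
  have inj: "inj_on ?rank (set xs)"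
    by (rule strict_mono_on_imp_inj_on[OF rank_strict_mono])
  have "?rank ` set xs \<subseteq> {1..length xs}"
  proof
    fix y assume "y \<in> ?rank ` set xs"
    then obtain a where a: "a \<in> set xs" "y = ?rank a" by auto
    then have "1 \<le> y" by (auto simp: Suc_le_eq card_gt_0_iff)
    moreover have "y \<le> card (set xs)" using a by (auto intro!: card_mono)
    ultimately show "y \<in> {1..length xs}" using assms by (simp add: distinct_card)
  qed
  moreover have "card (?rank ` set xs) = length xs"
    using inj assms by (simp add: card_image distinct_card)
  ultimately have "?rank ` set xs = {1..length xs}"
    by (intro card_subset_eq) auto
  then show ?thesis
    unfolding perms_def st_def using inj assms by (simp add: distinct_map)
qed

lemma pbs_nth: "pbs x y ! k = (if k < length x then x ! k + length y else y ! (k - length x))"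
  by (simp add: pbs_def nth_append)

lemma length_pbs [simp]: "length (pbs x y) = length x + length y"
  by (simp add: pbs_def)

lemma pbs_in_perms:
  assumes "\<alpha> \<in> perms p" "\<beta> \<in> perms q"
  shows "pbs \<alpha> \<beta> \<in> perms (p + q)"
proof -
  have "set (map (\<lambda>a. a + q) \<alpha>) = (\<lambda>a. a + q) ` {1..p}"
    using assms(1) by (simp add: perms_def)
  also have "\<dots> = {q+1..q+p}"
    by (auto simp: image_iff intro!: bexI[where x="_ - q"])
  finally show ?thesis
    using assms perms_length[OF assms(2)] by (auto simp: perms_def pbs_def distinct_map)
qed

lemma mem_Inv_pbs_iff:
  assumes "\<alpha> \<in> perms p" "\<beta> \<in> perms q"
  shows "(i, j) \<in> Inv (pbs \<alpha> \<beta>) \<longleftrightarrow>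
    (i, j) \<in> Inv \<alpha> \<or> (1 \<le> i \<and> i \<le> p \<and> p < j \<and> j \<le> p + q) \<or> (p < i \<and> (i - p, j - p) \<in> Inv \<beta>)"
proof -
  have len: "length \<alpha> = p" "length \<beta> = q"
    using assms by (simp_all add: perms_length)
  consider "j \<le> p" | "i \<le> p" "p < j" | "p < i"
    by linarith
  then show ?thesis
  proof cases
    case 1
    then show ?thesis using len by (auto simp: mem_Inv_iff pbs_nth)
  next
    case 2
    have "(i, j) \<in> Inv (pbs \<alpha> \<beta>) \<longleftrightarrow> 1 \<le> i \<and> j \<le> p + q"
    proof (cases "1 \<le> i \<and> j \<le> p + q")
      case True
      then have "\<beta> ! (j - 1 - p) \<le> q" "1 \<le> \<alpha> ! (i - 1)"
        using perms_nth_bounds[OF assms(2), of "j - 1 - p"] perms_nth_bounds[OF assms(1), of "i - 1"] 2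
        by auto
      with True 2 len show ?thesis by (auto simp: mem_Inv_iff pbs_nth)
    qed (use len in \<open>auto simp: mem_Inv_iff\<close>)
    with 2 len show ?thesis by (auto simp: mem_Inv_iff)
  next
    case 3
    then have "i - 1 - p = i - p - 1" "j - 1 - p = j - p - 1" by auto
    with 3 len show ?thesis by (auto simp: mem_Inv_iff pbs_nth)
  qed
qed

lemma pvee_eq_pbs: "pvee x y = pbs (x @ [length x + 1]) y"
  by (simp add: pvee_def pbs_def)

lemma snoc_in_perms: "\<alpha> \<in> perms p \<Longrightarrow> \<alpha> @ [p + 1] \<in> perms (p + 1)"
  by (auto simp: perms_def)

lemma Inv_snoc_max:
  assumes "\<alpha> \<in> perms p"
  shows "Inv (\<alpha> @ [p + 1]) = Inv \<alpha>"
proof -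
  have "(i, j) \<in> Inv (\<alpha> @ [p + 1]) \<longleftrightarrow> (i, j) \<in> Inv \<alpha>" for i j
  proof (cases "j = p + 1")
    case True
    then show ?thesis
      using perms_nth_bounds[OF assms, of "i - 1"] perms_length[OF assms]
      by (auto simp: mem_Inv_iff nth_append)
  next
    case False
    then show ?thesis
      using perms_length[OF assms] by (auto simp: mem_Inv_iff nth_append)
  qed
  then show ?thesis by auto
qed

lemma pvee_in_perms:
  "\<alpha> \<in> perms p \<Longrightarrow> \<beta> \<in> perms q \<Longrightarrow> pvee \<alpha> \<beta> \<in> perms (p + q + 1)"
  using pbs_in_perms[OF snoc_in_perms] by (simp add: pvee_eq_pbs perms_length)

lemma mem_Inv_pvee_iff:
  assumes "\<alpha> \<in> perms p" "\<beta> \<in> perms q"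
  shows "(i, j) \<in> Inv (pvee \<alpha> \<beta>) \<longleftrightarrow> (i, j) \<in> Inv \<alpha> \<or>
    (1 \<le> i \<and> i \<le> p + 1 \<and> p + 1 < j \<and> j \<le> p + q + 1) \<or> (p + 1 < i \<and> (i - (p + 1), j - (p + 1)) \<in> Inv \<beta>)"
  using mem_Inv_pbs_iff[OF snoc_in_perms[OF assms(1)] assms(2), of i j]
  unfolding pvee_eq_pbs perms_length[OF assms(1)] Inv_snoc_max[OF assms(1)] by simp

section \<open>Tree inversions and the Tamari order\<close>

definition tree_Inv :: "tree \<Rightarrow> (nat \<times> nat) set" where
  "tree_Inv t = Inv (gam t)"

lemma gam_in_perms: "gam t \<in> perms (nodes t)"
proof (induction t)
  case Lf
  show ?case by (simp add: perms_def)
next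
  case (Nd l r)
  then show ?case using pvee_in_perms by fastforce
qed

lemma length_gam [simp]: "length (gam t) = nodes t"
  using gam_in_perms perms_length by blast

lemma tree_Inv_Lf [simp]: "tree_Inv Lf = {}"
  by (simp add: tree_Inv_def)

lemma mem_tree_Inv_Nd_iff:
  "(i, j) \<in> tree_Inv (Nd l r) \<longleftrightarrow> (i, j) \<in> tree_Inv l \<or>
     (1 \<le> i \<and> i \<le> nodes l + 1 \<and> nodes l + 1 < j \<and> j \<le> nodes l + nodes r + 1) \<or>
     (nodes l + 1 < i \<and> (i - (nodes l + 1), j - (nodes l + 1)) \<in> tree_Inv r)"
  unfolding tree_Inv_def using mem_Inv_pvee_iff[OF gam_in_perms gam_in_perms] by simp

lemma tree_Inv_bounds: "(i, j) \<in> tree_Inv t \<Longrightarrow> 1 \<le> i \<and> i < j \<and> j \<le> nodes t"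
  by (simp add: tree_Inv_def mem_Inv_iff)

lemma mem_tree_Inv_Nd_left_iff:
  "j \<le> nodes l \<Longrightarrow> (i, j) \<in> tree_Inv (Nd l r) \<longleftrightarrow> (i, j) \<in> tree_Inv l"
  by (auto simp: mem_tree_Inv_Nd_iff dest: tree_Inv_bounds)

lemma mem_tree_Inv_Nd_right_iff:
  "1 \<le> i \<Longrightarrow> (i + (nodes l + 1), j + (nodes l + 1)) \<in> tree_Inv (Nd l r) \<longleftrightarrow> (i, j) \<in> tree_Inv r"
  by (auto simp: mem_tree_Inv_Nd_iff dest: tree_Inv_bounds)

lemma tree_Inv_Nd_root: "(i, nodes l + 1) \<notin> tree_Inv (Nd l r)"
  by (auto simp: mem_tree_Inv_Nd_iff dest: tree_Inv_bounds)

lemma tree_Inv_left_closed: "(b, c) \<in> tree_Inv t \<Longrightarrow> 1 \<le> a \<Longrightarrow> a \<le> b \<Longrightarrow> (a, c) \<in> tree_Inv t"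
proof (induction t arbitrary: a b c)
  case (Nd l r)
  let ?p = "nodes l + 1"
  show ?case
  proof (cases "?p < a")
    case True
    with Nd.prems have "(b - ?p, c - ?p) \<in> tree_Inv r" "1 \<le> a - ?p" "a - ?p \<le> b - ?p"
      by (auto simp: mem_tree_Inv_Nd_iff dest: tree_Inv_bounds)
    with True show ?thesis
      using Nd.IH(2) by (auto simp: mem_tree_Inv_Nd_iff)
  next
    case False
    with Nd.prems show ?thesis
      using Nd.IH(1) tree_Inv_bounds[of "b - ?p" "c - ?p" r] by (auto simp: mem_tree_Inv_Nd_iff)
  qed
qed simp

lemma tree_Inv_rotate: "tree_Inv (Nd (Nd a b) c) \<subseteq> tree_Inv (Nd a (Nd b c))"
proof clarify
  fix i j
  assume "(i, j) \<in> tree_Inv (Nd (Nd a b) c)"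
  then show "(i, j) \<in> tree_Inv (Nd a (Nd b c))"
    by (auto simp: mem_tree_Inv_Nd_iff)
qed

lemma tamari_le_refl [simp]: "tamari_le t t"
  by (simp add: tamari_le_def)

lemma tamari_le_trans [trans]: "tamari_le s t \<Longrightarrow> tamari_le t u \<Longrightarrow> tamari_le s u"
  unfolding tamari_le_def by (rule rtranclp_trans)

lemma tamari_le_rotate: "tamari_le (Nd (Nd a b) c) (Nd a (Nd b c))"
  unfolding tamari_le_def by (intro r_into_rtranclp tam_step.rot)

lemma tamari_le_Nd:
  assumes "tamari_le s s'" "tamari_le t t'"
  shows "tamari_le (Nd s t) (Nd s' t')"
proof -
  have "tamari_le (Nd s t) (Nd s' t)"
    using assms(1) unfolding tamari_le_def
    by (induction rule: rtranclp_induct) (auto intro: rtranclp.rtrancl_into_rtrancl tam_step.left)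
  moreover have "tamari_le (Nd s' t) (Nd s' t')"
    using assms(2) unfolding tamari_le_def
    by (induction rule: rtranclp_induct) (auto intro: rtranclp.rtrancl_into_rtrancl tam_step.right)
  ultimately show ?thesis by (rule tamari_le_trans)
qed

lemma tam_step_nodes: "tam_step s t \<Longrightarrow> nodes s = nodes t"
  by (induction rule: tam_step.induct) auto

lemma tam_step_tree_Inv: "tam_step s t \<Longrightarrow> tree_Inv s \<subseteq> tree_Inv t"
proof (induction rule: tam_step.induct)
  case rot
  show ?case by (rule tree_Inv_rotate)
next
  case (left s s' u)
  moreover have "nodes s' = nodes s" using tam_step_nodes[OF left.hyps] by simp
  ultimately show ?case by (auto simp: mem_tree_Inv_Nd_iff)
next
  case (right u u' s)
  moreover have "nodes u' = nodes u" using tam_step_nodes[OF right.hyps] by simp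
  ultimately show ?case by (auto simp: mem_tree_Inv_Nd_iff)
qed

lemma tamari_le_imp_tree_Inv_subset: "tamari_le s t \<Longrightarrow> tree_Inv s \<subseteq> tree_Inv t"
  unfolding tamari_le_def by (induction rule: rtranclp_induct) (auto dest: tam_step_tree_Inv)

fun prefix_tree :: "nat \<Rightarrow> tree \<Rightarrow> tree" where
  "prefix_tree k Lf = Lf"
| "prefix_tree k (Nd l r) =
     (if k \<le> nodes l then prefix_tree k l else Nd l (prefix_tree (k - nodes l - 1) r))"

fun suffix_tree :: "nat \<Rightarrow> tree \<Rightarrow> tree" where
  "suffix_tree k Lf = Lf"
| "suffix_tree k (Nd l r) =
     (if nodes l < k then suffix_tree (k - nodes l - 1) r else Nd (suffix_tree k l) r)"

lemma nodes_prefix_tree [simp]: "nodes (prefix_tree k t) = min k (nodes t)"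
  by (induction t arbitrary: k) auto

lemma nodes_suffix_tree [simp]: "nodes (suffix_tree k t) = nodes t - k"
  by (induction t arbitrary: k) auto

lemma prefix_tree_nodes [simp]: "prefix_tree (nodes t) t = t"
  by (induction t) simp_all

lemma mem_tree_Inv_prefix_tree_iff:
  "(i, j) \<in> tree_Inv (prefix_tree k t) \<longleftrightarrow> (i, j) \<in> tree_Inv t \<and> j \<le> k"
proof (induction t arbitrary: k i j)
  case (Nd l r)
  then show ?case
    by (auto simp: mem_tree_Inv_Nd_iff min_def dest: tree_Inv_bounds)
qed simp

lemma mem_tree_Inv_suffix_tree_iff:
  "(i, j) \<in> tree_Inv (suffix_tree k t) \<longleftrightarrow> 1 \<le> i \<and> (i + k, j + k) \<in> tree_Inv t"
proof (induction t arbitrary: k i j)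
  case (Nd l r)
  then show ?case
    by (auto simp: mem_tree_Inv_Nd_iff dest: tree_Inv_bounds)
qed simp

lemma tree_Inv_subset_Nd_of_prefix_suffix:
  assumes "nodes l = j - 1" "nodes r = nodes t - j" "1 \<le> j"
    and left: "tree_Inv (prefix_tree (j - 1) t) \<subseteq> tree_Inv l"
    and right: "tree_Inv (suffix_tree j t) \<subseteq> tree_Inv r"
    and column: "\<And>x. (x, j) \<notin> tree_Inv t"
  shows "tree_Inv t \<subseteq> tree_Inv (Nd l r)"
proof clarify
  fix x y
  assume xy: "(x, y) \<in> tree_Inv t"
  then have bounds: "1 \<le> x" "x < y" "y \<le> nodes t" using tree_Inv_bounds by auto
  with column xy consider "y < j" | "x \<le> j" "j < y" | "j < x" by fastforce
  then show "(x, y) \<in> tree_Inv (Nd l r)"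
  proof cases
    case 1
    with xy left have "(x, y) \<in> tree_Inv l" by (auto simp: mem_tree_Inv_prefix_tree_iff)
    then show ?thesis using assms(1,3) 1 by (simp add: mem_tree_Inv_Nd_iff)
  next
    case 2
    then show ?thesis using assms(1-3) bounds by (simp add: mem_tree_Inv_Nd_iff)
  next
    case 3
    with xy bounds have "(x - j, y - j) \<in> tree_Inv (suffix_tree j t)"
      by (simp add: mem_tree_Inv_suffix_tree_iff)
    with right have "(x - j, y - j) \<in> tree_Inv r" by blast
    then show ?thesis using assms(1,3) 3 by (simp add: mem_tree_Inv_Nd_iff)
  qed
qed

lemma tree_Inv_Nd_subset_left:
  assumes "tree_Inv (Nd s1 s2) \<subseteq> tree_Inv t"
  shows "tree_Inv s1 \<subseteq> tree_Inv (prefix_tree (nodes s1) t)"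
proof clarify
  fix i j
  assume ij: "(i, j) \<in> tree_Inv s1"
  then have "j \<le> nodes s1" by (simp add: tree_Inv_bounds)
  with ij assms show "(i, j) \<in> tree_Inv (prefix_tree (nodes s1) t)"
    by (auto simp: mem_tree_Inv_prefix_tree_iff mem_tree_Inv_Nd_left_iff)
qed

lemma tree_Inv_Nd_subset_right:
  assumes "tree_Inv (Nd s1 s2) \<subseteq> tree_Inv (Nd t1 t2)" "nodes s1 = nodes t1"
  shows "tree_Inv s2 \<subseteq> tree_Inv t2"
proof clarify
  fix i j
  assume ij: "(i, j) \<in> tree_Inv s2"
  then have "1 \<le> i" using tree_Inv_bounds by blast
  with ij assms show "(i, j) \<in> tree_Inv t2"
    using mem_tree_Inv_Nd_right_iff[of i s1 j s2] mem_tree_Inv_Nd_right_iff[of i t1 j t2] by auto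
qed

lemma tree_Inv_Nd_subset_root_le:
  assumes "tree_Inv (Nd s1 s2) \<subseteq> tree_Inv (Nd t1 t2)" "nodes (Nd s1 s2) = nodes (Nd t1 t2)"
  shows "nodes t1 \<le> nodes s1"
proof (rule ccontr)
  assume "\<not> nodes t1 \<le> nodes s1"
  with assms(2) have "(nodes s1 + 1, nodes t1 + 1) \<in> tree_Inv (Nd s1 s2)"
    by (auto simp: mem_tree_Inv_Nd_iff)
  with assms(1) tree_Inv_Nd_root show False by blast
qed

lemma tree_Inv_Nd_subset_rotated:
  assumes sub: "tree_Inv (Nd s1 s2) \<subseteq> tree_Inv (Nd t1 t2)"
    and nodes: "nodes (Nd s1 s2) = nodes (Nd t1 t2)" and root: "nodes s1 = nodes t1 + k + 1"
  shows "tree_Inv (Nd (prefix_tree k t2) s2) \<subseteq> tree_Inv t2"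
proof clarify
  fix i j
  let ?w = "prefix_tree k t2" and ?m = "nodes t1 + 1"
  assume ij: "(i, j) \<in> tree_Inv (Nd ?w s2)"
  have w: "nodes ?w = k" using nodes root by simp
  show "(i, j) \<in> tree_Inv t2"
  proof (cases "(i, j) \<in> tree_Inv ?w")
    case True
    then show ?thesis by (simp add: mem_tree_Inv_prefix_tree_iff)
  next
    case False
    with ij w root nodes have "(i + ?m, j + ?m) \<in> tree_Inv (Nd s1 s2)"
      by (auto simp: mem_tree_Inv_Nd_iff)
    with sub have "(i + ?m, j + ?m) \<in> tree_Inv (Nd t1 t2)" by blast
    moreover have "1 \<le> i" using ij tree_Inv_bounds by blast
    ultimately show ?thesis using mem_tree_Inv_Nd_right_iff[of i t1 j t2] by blast
  qed
qed

lemma tamari_le_of_tree_Inv_subset: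
  "nodes s = nodes t \<Longrightarrow> tree_Inv s \<subseteq> tree_Inv t \<Longrightarrow> tamari_le s t"
proof (induction "nodes s" arbitrary: s t rule: less_induct)
  case less
  show ?case
  proof (cases s)
    case Lf
    with less.prems show ?thesis by (cases t) auto
  next
    case (Nd s1 s2)
    with less.prems obtain t1 t2 where t: "t = Nd t1 t2" by (cases t) auto
    let ?p = "nodes s1"
    have sub: "tree_Inv (Nd s1 s2) \<subseteq> tree_Inv (Nd t1 t2)"
      and nodes: "nodes (Nd s1 s2) = nodes (Nd t1 t2)"
      using less.prems Nd t by simp_all
    have "nodes s1 < nodes s" "nodes (prefix_tree ?p t) = ?p"
      using Nd less.prems by simp_all
    with tree_Inv_Nd_subset_left[OF sub[folded t]] have left: "tamari_le s1 (prefix_tree ?p t)"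
      using less.hyps by metis
    have "nodes t1 \<le> ?p" by (rule tree_Inv_Nd_subset_root_le[OF sub nodes])
    then consider "nodes t1 = ?p" | k where "?p = nodes t1 + k + 1"
      by (metis le_eq_less_or_eq less_natE add_Suc_right add.assoc Suc_eq_plus1)
    then show ?thesis
    proof cases
      case 1
      have "prefix_tree ?p t = t1" using t by (simp flip: 1)
      moreover have "tamari_le s2 t2"
        using less.hyps tree_Inv_Nd_subset_right[OF sub 1[symmetric]] Nd nodes 1 by simp
      ultimately show ?thesis using left Nd t tamari_le_Nd by simp
    next
      case (2 k)
      \<comment> \<open>the root of t lies left of that of s: compare s1 with the prefix Nd t1 w of t, then rotate\<close>
      let ?w = "prefix_tree k t2"
      have "prefix_tree ?p t = Nd t1 ?w" using t 2 by simp
      then have "tamari_le s (Nd (Nd t1 ?w) s2)" using left Nd tamari_le_Nd by simp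
      also have "tamari_le \<dots> (Nd t1 (Nd ?w s2))" by (rule tamari_le_rotate)
      also have "tamari_le \<dots> t"
        using less.hyps[of "Nd ?w s2" t2] tree_Inv_Nd_subset_rotated[OF sub nodes 2] Nd t nodes 2
        by (simp add: tamari_le_Nd)
      finally show ?thesis .
    qed
  qed
qed

lemma tamari_le_iff_tree_Inv_subset:
  "nodes s = nodes t \<Longrightarrow> tamari_le s t \<longleftrightarrow> tree_Inv s \<subseteq> tree_Inv t"
  using tamari_le_of_tree_Inv_subset tamari_le_imp_tree_Inv_subset by blast

section \<open>The map lambda\<close>

definition left_closure :: "(nat \<times> nat) set \<Rightarrow> (nat \<times> nat) set" where
  "left_closure X = {(i, j). 1 \<le> i \<and> (\<exists>k. i \<le> k \<and> (k, j) \<in> X)}"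

lemma perms_split_max:
  assumes "\<sigma> \<in> perms n" "n \<noteq> 0"
  obtains A B where "\<sigma> = A @ n # B" "n \<notin> set A" "distinct A" "distinct B"
    "n = length A + length B + 1"
proof -
  have "n \<in> set \<sigma>" using assms by (simp add: perms_def)
  then obtain A B where \<sigma>: "\<sigma> = A @ n # B" "n \<notin> set A" by (metis split_list_first)
  with assms(1) have "distinct A" "distinct B" "n = length A + length B + 1"
    using perms_length[OF assms(1)] by (auto simp: perms_def)
  with \<sigma> that show ?thesis by blast
qed

lemma lamf_Suc_split:
  assumes "n \<notin> set A" "n = length A + length B + 1"
  shows "lamf (Suc m) (A @ n # B) = Nd (lamf m (st A)) (lamf m (st B))"
proof -
  have "takeWhile (\<lambda>a. a \<noteq> n) (A @ n # B) = A"
    using assms(1) by (subst takeWhile_append2) auto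
  with assms(2) show ?thesis by (simp add: Let_def)
qed

lemma lamf_eq_lam:
  assumes "\<sigma> \<in> perms (length \<sigma>)" "length \<sigma> \<le> m"
  shows "lamf m \<sigma> = lam \<sigma>"
  using assms
proof (induction "length \<sigma>" arbitrary: \<sigma> m rule: less_induct)
  case less
  show ?case
  proof (cases "\<sigma> = []")
    case True
    with less.prems show ?thesis by (cases m) (simp_all add: lam_def)
  next
    case False
    obtain n where n: "length \<sigma> = n" by simp
    with less.prems(1) False obtain A B where \<sigma>: "\<sigma> = A @ n # B" "n \<notin> set A"
      and AB: "distinct A" "distinct B" "n = length A + length B + 1"
      by (auto elim: perms_split_max)
    have split: "lamf m' \<sigma> = Nd (lam (st A)) (lam (st B))" if "n \<le> m'" for m'
    proof -
      obtain m'' where m'': "m' = Suc m''" "n \<le> Suc m''" using \<open>n \<le> m'\<close> AB(3) by (cases m') auto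
      have "lamf m' \<sigma> = Nd (lamf m'' (st A)) (lamf m'' (st B))"
        unfolding m''(1) \<sigma>(1) by (rule lamf_Suc_split[OF \<sigma>(2) AB(3)])
      also have "\<dots> = Nd (lam (st A)) (lam (st B))"
        using less.hyps[of "st A" m''] less.hyps[of "st B" m''] AB n m''(2) by (simp add: st_in_perms)
      finally show ?thesis .
    qed
    show ?thesis
      using split less.prems(2) n by (simp add: lam_def)
  qed
qed

lemma lam_split:
  assumes "A @ n # B \<in> perms n"
  shows "lam (A @ n # B) = Nd (lam (st A)) (lam (st B))"
proof -
  have "n \<notin> set A" "distinct A" "distinct B" and n: "n = length A + length B + 1"
    using assms perms_length[OF assms] by (auto simp: perms_def)
  then have "lam (A @ n # B) = Nd (lamf (length A + length B) (st A)) (lamf (length A + length B) (st B))"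
    using lamf_Suc_split[of n A B "length A + length B"] by (simp add: lam_def)
  with \<open>distinct A\<close> \<open>distinct B\<close> show ?thesis by (simp add: lamf_eq_lam st_in_perms)
qed

lemma Inv_at_max:
  assumes "A @ n # B \<in> perms n"
  shows "(x, length A + 1) \<notin> Inv (A @ n # B)"
    and "length A + 1 < y \<Longrightarrow> y \<le> n \<Longrightarrow> (length A + 1, y) \<in> Inv (A @ n # B)"
proof -
  let ?\<sigma> = "A @ n # B" and ?k = "length A + 1"
  have max: "?\<sigma> ! (?k - 1) = n" by simp
  show "(x, ?k) \<notin> Inv ?\<sigma>"
  proof
    assume "(x, ?k) \<in> Inv ?\<sigma>"
    then have "x - 1 < n" "?\<sigma> ! (x - 1) > n"
      using max perms_length[OF assms] by (auto simp: mem_Inv_iff simp del: nth_append_length)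
    with perms_nth_bounds[OF assms] show False by fastforce
  qed
  assume y: "?k < y" "y \<le> n"
  have "?\<sigma> ! (y - 1) \<noteq> ?\<sigma> ! (?k - 1)"
    using assms y perms_length[OF assms] nth_eq_iff_index_eq[of ?\<sigma> "y - 1" "?k - 1"]
    by (auto simp: perms_def simp del: nth_append_length)
  moreover have "?\<sigma> ! (y - 1) \<le> n"
    using perms_nth_bounds[OF assms, of "y - 1"] y by simp
  ultimately show "(?k, y) \<in> Inv ?\<sigma>"
    using y perms_length[OF assms] max by (auto simp: mem_Inv_iff simp del: nth_append_length)
qed

lemma mem_left_closure_Inv_split_iff:
  assumes \<sigma>: "A @ n # B \<in> perms n"
  defines "k \<equiv> length A + 1"
  shows "(i, j) \<in> left_closure (Inv (A @ n # B)) \<longleftrightarrow> (i, j) \<in> left_closure (Inv A) \<or>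
    (1 \<le> i \<and> i \<le> k \<and> k < j \<and> j \<le> n) \<or> (k < i \<and> (i - k, j - k) \<in> left_closure (Inv B))"
proof -
  let ?\<sigma> = "A @ n # B"
  have "take (k - 1) ?\<sigma> = A" "drop k ?\<sigma> = B" by (simp_all add: k_def)
  then have A: "(x, y) \<in> Inv A \<longleftrightarrow> (x, y) \<in> Inv ?\<sigma> \<and> y < k"
    and B: "(x, y) \<in> Inv B \<longleftrightarrow> 1 \<le> x \<and> (x + k, y + k) \<in> Inv ?\<sigma>" for x y
    using mem_Inv_take_iff[of x y "k - 1" ?\<sigma>] mem_Inv_drop_iff[of x y k ?\<sigma>] by (auto simp: k_def)
  have bound: "(x, y) \<in> Inv ?\<sigma> \<Longrightarrow> y \<le> n" for x y
    using perms_length[OF \<sigma>] by (simp add: mem_Inv_iff)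
  consider "j < k" | "j = k" | "k < j" "i \<le> k" | "k < j" "k < i" by linarith
  then show ?thesis
  proof cases
    case 1
    then show ?thesis using A by (auto simp: left_closure_def mem_Inv_iff[of _ 0])
  next
    case 2
    then show ?thesis
      using A Inv_at_max(1)[OF \<sigma>] by (auto simp: left_closure_def mem_Inv_iff[of _ 0] k_def)
  next
    case 3
    then show ?thesis
      using A bound Inv_at_max(2)[OF \<sigma>] by (auto simp: left_closure_def k_def)
  next
    case 4
    have "(\<exists>k'\<ge>i. (k', j) \<in> Inv ?\<sigma>) \<longleftrightarrow> (\<exists>k'\<ge>i - k. (k', j - k) \<in> Inv B)"
    proof
      assume "\<exists>k'\<ge>i. (k', j) \<in> Inv ?\<sigma>"
      then obtain k' where "i \<le> k'" "(k', j) \<in> Inv ?\<sigma>" by blast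
      with 4 have "i - k \<le> k' - k" "(k' - k, j - k) \<in> Inv B" using B[of "k' - k" "j - k"] by auto
      then show "\<exists>k'\<ge>i - k. (k', j - k) \<in> Inv B" by blast
    next
      assume "\<exists>k'\<ge>i - k. (k', j - k) \<in> Inv B"
      then obtain k' where "i - k \<le> k'" "(k', j - k) \<in> Inv B" by blast
      with 4 have "i \<le> k' + k" "(k' + k, j) \<in> Inv ?\<sigma>" using B[of k' "j - k"] by auto
      then show "\<exists>k'\<ge>i. (k', j) \<in> Inv ?\<sigma>" by blast
    qed
    with 4 show ?thesis using A by (auto simp: left_closure_def)
  qed
qed

lemma nodes_lam: "\<sigma> \<in> perms n \<Longrightarrow> nodes (lam \<sigma>) = n"
proof (induction n arbitrary: \<sigma> rule: less_induct)
  case (less n)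
  show ?case
  proof (cases "n = 0")
    case True
    with less.prems have "\<sigma> = []" using perms_length by blast
    with True show ?thesis by (simp add: lam_def)
  next
    case False
    with less.prems obtain A B where \<sigma>: "\<sigma> = A @ n # B" "distinct A" "distinct B"
      and n: "n = length A + length B + 1"
      by (auto elim: perms_split_max)
    have "nodes (lam (st A)) = length A" "nodes (lam (st B)) = length B"
      using less.IH[of "length A" "st A"] less.IH[of "length B" "st B"] st_in_perms[of A] st_in_perms[of B]
        \<sigma> n by simp_all
    with less.prems show ?thesis unfolding \<sigma>(1) n by (simp add: lam_split)
  qed
qed

lemma tree_Inv_lam: "\<sigma> \<in> perms n \<Longrightarrow> tree_Inv (lam \<sigma>) = left_closure (Inv \<sigma>)"
proof (induction n arbitrary: \<sigma> rule: less_induct)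
  case (less n)
  show ?case
  proof (cases "n = 0")
    case True
    with less.prems have "\<sigma> = []" using perms_length by blast
    then show ?thesis by (simp add: lam_def left_closure_def)
  next
    case False
    with less.prems obtain A B where \<sigma>: "\<sigma> = A @ n # B" "distinct A" "distinct B"
      and n: "n = length A + length B + 1"
      by (auto elim: perms_split_max)
    have "tree_Inv (lam (st A)) = left_closure (Inv A)" "tree_Inv (lam (st B)) = left_closure (Inv B)"
      "nodes (lam (st A)) = length A" "nodes (lam (st B)) = length B"
      using less.IH[of "length A" "st A"] less.IH[of "length B" "st B"] st_in_perms[of A] st_in_perms[of B]
        nodes_lam \<sigma> n by simp_all
    then show ?thesis
      using mem_left_closure_Inv_split_iff[of A n B] less.prems n
      unfolding \<sigma>(1) lam_split[OF less.prems[unfolded \<sigma>(1)]]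
      by (auto simp: mem_tree_Inv_Nd_iff)
  qed
qed

lemma left_closure_Inv_subset_tree_Inv_iff:
  "left_closure (Inv \<sigma>) \<subseteq> tree_Inv t \<longleftrightarrow> Inv \<sigma> \<subseteq> tree_Inv t"
proof
  show "Inv \<sigma> \<subseteq> tree_Inv t" if "left_closure (Inv \<sigma>) \<subseteq> tree_Inv t"
    using that by (force simp: left_closure_def mem_Inv_iff)
  show "left_closure (Inv \<sigma>) \<subseteq> tree_Inv t" if "Inv \<sigma> \<subseteq> tree_Inv t"
    using that tree_Inv_left_closed by (fastforce simp: left_closure_def)
qed

lemma tamari_le_lam_iff:
  assumes "\<sigma> \<in> perms n" "nodes t = n"
  shows "tamari_le (lam \<sigma>) t \<longleftrightarrow> weak_le \<sigma> (gam t)"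
  using assms
  by (simp add: tamari_le_iff_tree_Inv_subset nodes_lam tree_Inv_lam weak_le_def
      left_closure_Inv_subset_tree_Inv_iff flip: tree_Inv_def)

section \<open>Global descents and the map rho\<close>

definition separated_pairs :: "nat set \<Rightarrow> nat \<Rightarrow> (nat \<times> nat) set" where
  "separated_pairs S n = {(i, j). 1 \<le> i \<and> i < j \<and> j \<le> n \<and> (\<exists>s\<in>S. i \<le> s \<and> s < j)}"

lemma separated_pairs_singleton_subset_iff:
  "separated_pairs {p} n \<subseteq> X \<longleftrightarrow> (\<forall>i j. 1 \<le> i \<longrightarrow> i \<le> p \<longrightarrow> p < j \<longrightarrow> j \<le> n \<longrightarrow> (i, j) \<in> X)"
  by (auto simp: separated_pairs_def)

lemma set_take_drop_of_separated_pairs_subset: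
  assumes \<sigma>: "\<sigma> \<in> perms n" and "p \<le> n" and sep: "separated_pairs {p} n \<subseteq> Inv \<sigma>"
  shows "set (drop p \<sigma>) = {1..n - p}" "set (take p \<sigma>) = {n - p + 1..n}"
proof -
  let ?T = "take p \<sigma>" and ?D = "drop p \<sigma>"
  have len: "length \<sigma> = n" using \<sigma> by (rule perms_length)
  have "distinct (?T @ ?D)" "set (?T @ ?D) = {1..n}"
    using \<sigma> unfolding append_take_drop_id by (simp_all add: perms_def)
  then have parts: "set ?T \<union> set ?D = {1..n}" "set ?T \<inter> set ?D = {}" "distinct ?D"
    unfolding set_append distinct_append by blast+
  have above: "y < x" if xy: "x \<in> set ?T" "y \<in> set ?D" for x y
  proof -
    obtain a b where "a < p" "x = \<sigma> ! a" "b < n - p" "y = \<sigma> ! (p + b)"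
      using xy len \<open>p \<le> n\<close> by (auto simp: in_set_conv_nth)
    moreover from this have "(a + 1, p + b + 1) \<in> Inv \<sigma>"
      using sep by (auto simp: separated_pairs_singleton_subset_iff)
    ultimately show ?thesis by (simp add: mem_Inv_iff)
  qed
  have "card (set ?D) = n - p" using parts len by (simp add: distinct_card)
  moreover have "set ?D \<subseteq> {1..n - p}"
  proof
    fix y assume y: "y \<in> set ?D"
    have "{1..y} \<subseteq> set ?D"
    proof
      fix x assume "x \<in> {1..y}"
      then have "x \<in> {1..n}" "x \<notin> set ?T" using y parts above[of x y] by auto
      then show "x \<in> set ?D" using parts by blast
    qed
    then have "card {1..y} \<le> card (set ?D)" by (intro card_mono) auto
    then show "y \<in> {1..n - p}" using y parts len by (auto simp: distinct_card)
  qed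
  ultimately show D: "set ?D = {1..n - p}" by (intro card_subset_eq) auto
  have "set ?T = {1..n} - set ?D" using parts by blast
  also have "\<dots> = {n - p + 1..n}" using D by auto
  finally show "set ?T = {n - p + 1..n}" .
qed

lemma pbs_of_separated_pairs_subset:
  assumes \<sigma>: "\<sigma> \<in> perms n" and "p \<le> n" and sep: "separated_pairs {p} n \<subseteq> Inv \<sigma>"
  shows "\<exists>\<alpha> \<beta>. \<alpha> \<in> perms p \<and> \<beta> \<in> perms (n - p) \<and> \<sigma> = pbs \<alpha> \<beta>"
proof -
  let ?T = "take p \<sigma>" and ?D = "drop p \<sigma>" and ?m = "n - p"
  note D = set_take_drop_of_separated_pairs_subset(1)[OF assms]
    and T = set_take_drop_of_separated_pairs_subset(2)[OF assms]
  have "distinct ?T" "distinct ?D" using \<sigma> by (simp_all add: perms_def)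
  let ?\<alpha> = "map (\<lambda>a. a - ?m) ?T"
  have "inj_on (\<lambda>a. a - ?m) (set ?T)" using T by (intro inj_onI) auto
  moreover have "(\<lambda>a. a - ?m) ` {?m + 1..n} = {1..p}"
  proof
    show "{1..p} \<subseteq> (\<lambda>a. a - ?m) ` {?m + 1..n}"
    proof
      fix x assume "x \<in> {1..p}"
      with \<open>p \<le> n\<close> show "x \<in> (\<lambda>a. a - ?m) ` {?m + 1..n}"
        by (intro rev_image_eqI[of "x + ?m"]) auto
    qed
  qed (use \<open>p \<le> n\<close> in auto)
  ultimately have "?\<alpha> \<in> perms p" using \<open>distinct ?T\<close> T by (simp add: perms_def distinct_map)
  moreover have "map (\<lambda>a. a + ?m) ?\<alpha> = ?T" using T by (auto intro: map_idI)
  then have "\<sigma> = pbs ?\<alpha> ?D" using perms_length[OF \<sigma>] by (simp add: pbs_def)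
  moreover have "?D \<in> perms ?m" using \<open>distinct ?D\<close> D by (simp add: perms_def)
  ultimately show ?thesis by blast
qed

lemma mem_GDes_iff:
  assumes "\<sigma> \<in> perms n"
  shows "p \<in> GDes \<sigma> \<longleftrightarrow> 1 \<le> p \<and> p < n \<and> separated_pairs {p} n \<subseteq> Inv \<sigma>"
proof -
  have "separated_pairs {p} n \<subseteq> Inv (pbs \<alpha> \<beta>)" if "\<alpha> \<in> perms p" "\<beta> \<in> perms (n - p)" "p < n"
    for \<alpha> \<beta>
    using mem_Inv_pbs_iff[OF that(1,2)] that(3) by (auto simp: separated_pairs_def)
  then show ?thesis
    using pbs_of_separated_pairs_subset[OF assms] perms_length[OF assms]
    unfolding GDes_def by (auto simp del: One_nat_def)
qed

definition first_gdes :: "nat list \<Rightarrow> nat" where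
  "first_gdes \<sigma> = (if GDes \<sigma> = {} then length \<sigma> else Min (GDes \<sigma>))"

lemma GDes_subset: "GDes \<sigma> \<subseteq> {1..<length \<sigma>}"
  by (auto simp: GDes_def)

lemma first_gdes_in_GDes: "GDes \<sigma> \<noteq> {} \<Longrightarrow> first_gdes \<sigma> \<in> GDes \<sigma>"
  using finite_subset[OF GDes_subset] by (simp add: first_gdes_def)

lemma first_gdes_le: "p \<in> GDes \<sigma> \<Longrightarrow> first_gdes \<sigma> \<le> p"
  using finite_subset[OF GDes_subset] by (auto simp: first_gdes_def)

lemma first_gdes_bounds: "\<sigma> \<noteq> [] \<Longrightarrow> 1 \<le> first_gdes \<sigma> \<and> first_gdes \<sigma> \<le> length \<sigma>"
  using first_gdes_in_GDes[of \<sigma>] GDes_subset[of \<sigma>]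
  by (cases "GDes \<sigma> = {}") (auto simp: first_gdes_def Suc_le_eq)

lemma separated_pairs_first_gdes:
  assumes "\<sigma> \<in> perms n"
  shows "separated_pairs {first_gdes \<sigma>} n \<subseteq> Inv \<sigma>"
proof (cases "GDes \<sigma> = {}")
  case True
  then show ?thesis using perms_length[OF assms] by (auto simp: first_gdes_def separated_pairs_def)
next
  case False
  then show ?thesis using first_gdes_in_GDes mem_GDes_iff[OF assms] by blast
qed

lemma rhof_eq_rho: "length \<sigma> \<le> m \<Longrightarrow> rhof m \<sigma> = rho \<sigma>"
proof (induction "length \<sigma>" arbitrary: \<sigma> m rule: less_induct)
  case less
  show ?case
  proof (cases "\<sigma> = []")
    case True
    then show ?thesis by (cases m) (simp_all add: rho_def)
  next
    case False
    let ?A = "st (take (first_gdes \<sigma> - 1) \<sigma>)" and ?B = "st (drop (first_gdes \<sigma>) \<sigma>)"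
    have IH: "rhof m' ?A = rho ?A" "rhof m' ?B = rho ?B" if "length \<sigma> \<le> Suc m'" for m'
      using less.hyps first_gdes_bounds[OF False] that by auto
    have split: "rhof m' \<sigma> = Nd (rho ?A) (rho ?B)" if "length \<sigma> \<le> m'" for m'
      using that IH[of "m' - 1"] False by (cases m') (simp_all add: first_gdes_def Let_def)
    show ?thesis
      using split less.prems by (simp add: rho_def)
  qed
qed

lemma rho_split:
  assumes "\<sigma> \<noteq> []"
  shows "rho \<sigma> = Nd (rho (st (take (first_gdes \<sigma> - 1) \<sigma>))) (rho (st (drop (first_gdes \<sigma>) \<sigma>)))"
proof -
  obtain m where m: "length \<sigma> = Suc m" using assms by (cases \<sigma>) auto
  then have "rho \<sigma> = rhof (Suc m) \<sigma>" by (simp add: rho_def)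
  also have "\<dots> = Nd (rhof m (st (take (first_gdes \<sigma> - 1) \<sigma>))) (rhof m (st (drop (first_gdes \<sigma>) \<sigma>)))"
    using assms by (simp add: Let_def first_gdes_def)
  also have "rhof m (st (take (first_gdes \<sigma> - 1) \<sigma>)) = rho (st (take (first_gdes \<sigma> - 1) \<sigma>))"
    using first_gdes_bounds[OF assms] m by (intro rhof_eq_rho) (simp add: min_def, arith)
  also have "rhof m (st (drop (first_gdes \<sigma>) \<sigma>)) = rho (st (drop (first_gdes \<sigma>) \<sigma>))"
    using first_gdes_bounds[OF assms] m by (intro rhof_eq_rho) (simp, arith)
  finally show ?thesis .
qed

lemma rho_decomp:
  assumes \<sigma>: "\<sigma> \<in> perms n" and "n \<noteq> 0"
  obtains A B where "rho \<sigma> = Nd (rho A) (rho B)"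
    "A \<in> perms (first_gdes \<sigma> - 1)"
    "\<And>x y. (x, y) \<in> Inv A \<longleftrightarrow> (x, y) \<in> Inv \<sigma> \<and> y < first_gdes \<sigma>"
    "B \<in> perms (n - first_gdes \<sigma>)"
    "\<And>x y. (x, y) \<in> Inv B \<longleftrightarrow> 1 \<le> x \<and> (x + first_gdes \<sigma>, y + first_gdes \<sigma>) \<in> Inv \<sigma>"
    "1 \<le> first_gdes \<sigma>" "first_gdes \<sigma> \<le> n"
proof -
  let ?j = "first_gdes \<sigma>"
  have len: "length \<sigma> = n" "\<sigma> \<noteq> []" using \<sigma> assms(2) perms_length by auto
  have j: "1 \<le> ?j" "?j \<le> n" using first_gdes_bounds[OF len(2)] len(1) by auto
  have "distinct \<sigma>" using \<sigma> by (simp add: perms_def)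
  then have "st (take (?j - 1) \<sigma>) \<in> perms (?j - 1)" "st (drop ?j \<sigma>) \<in> perms (n - ?j)"
    using st_in_perms[of "take (?j - 1) \<sigma>"] st_in_perms[of "drop ?j \<sigma>"] len j by simp_all
  moreover have "(x, y) \<in> Inv (st (take (?j - 1) \<sigma>)) \<longleftrightarrow> (x, y) \<in> Inv \<sigma> \<and> y < ?j" for x y
    using j by (auto simp: mem_Inv_take_iff)
  moreover have "(x, y) \<in> Inv (st (drop ?j \<sigma>)) \<longleftrightarrow> 1 \<le> x \<and> (x + ?j, y + ?j) \<in> Inv \<sigma>" for x y
    by (simp add: mem_Inv_drop_iff)
  ultimately show ?thesis
    using that[OF rho_split[OF len(2)]] j by blast
qed

lemma nodes_rho: "\<sigma> \<in> perms n \<Longrightarrow> nodes (rho \<sigma>) = n"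
proof (induction n arbitrary: \<sigma> rule: less_induct)
  case (less n)
  show ?case
  proof (cases "n = 0")
    case True
    with less.prems have "\<sigma> = []" using perms_length by blast
    with True show ?thesis by (simp add: rho_def)
  next
    case False
    with less.prems obtain A B where "rho \<sigma> = Nd (rho A) (rho B)"
      "A \<in> perms (first_gdes \<sigma> - 1)" "B \<in> perms (n - first_gdes \<sigma>)"
      "1 \<le> first_gdes \<sigma>" "first_gdes \<sigma> \<le> n"
      by (rule rho_decomp)
    with less.IH[of "first_gdes \<sigma> - 1" A] less.IH[of "n - first_gdes \<sigma>" B] show ?thesis by simp
  qed
qed

lemma tree_Inv_rho_subset: "\<sigma> \<in> perms n \<Longrightarrow> tree_Inv (rho \<sigma>) \<subseteq> Inv \<sigma>"
proof (induction n arbitrary: \<sigma> rule: less_induct)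
  case (less n)
  show ?case
  proof (cases "n = 0")
    case True
    with less.prems have "\<sigma> = []" using perms_length by blast
    then show ?thesis by (simp add: rho_def)
  next
    case False
    let ?j = "first_gdes \<sigma>"
    obtain A B where rho: "rho \<sigma> = Nd (rho A) (rho B)"
      and A: "A \<in> perms (?j - 1)" "\<And>x y. (x, y) \<in> Inv A \<longleftrightarrow> (x, y) \<in> Inv \<sigma> \<and> y < ?j"
      and B: "B \<in> perms (n - ?j)" "\<And>x y. (x, y) \<in> Inv B \<longleftrightarrow> 1 \<le> x \<and> (x + ?j, y + ?j) \<in> Inv \<sigma>"
      and j: "1 \<le> ?j" "?j \<le> n"
      using rho_decomp[OF less.prems False] by blast
    have IH: "tree_Inv (rho A) \<subseteq> Inv A" "tree_Inv (rho B) \<subseteq> Inv B"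
      using less.IH[OF _ A(1)] less.IH[OF _ B(1)] j False by auto
    have nodes: "nodes (rho A) + 1 = ?j" "nodes (rho A) + nodes (rho B) + 1 = n"
      using nodes_rho A(1) B(1) j by auto
    show ?thesis
    proof clarify
      fix x y
      assume "(x, y) \<in> tree_Inv (rho \<sigma>)"
      then consider "(x, y) \<in> tree_Inv (rho A)" | "(x, y) \<in> separated_pairs {?j} n"
        | "?j < x" "(x - ?j, y - ?j) \<in> tree_Inv (rho B)"
        unfolding rho mem_tree_Inv_Nd_iff nodes by (auto simp: separated_pairs_def)
      then show "(x, y) \<in> Inv \<sigma>"
      proof cases
        case 3
        then have "(x - ?j + ?j, y - ?j + ?j) \<in> Inv \<sigma>" using IH(2) B(2) by blast
        moreover have "?j < y" using 3 tree_Inv_bounds by fastforce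
        ultimately show ?thesis using 3 by simp
      qed (use IH(1) A(2) separated_pairs_first_gdes[OF less.prems] in blast)+
    qed
  qed
qed

lemma GDes_below_tree_Inv_column:
  assumes \<sigma>: "\<sigma> \<in> perms n" and sub: "tree_Inv t \<subseteq> Inv \<sigma>"
    and j: "separated_pairs {j} n \<subseteq> Inv \<sigma>" and a: "(a, j) \<in> tree_Inv t"
  shows "\<exists>c\<in>GDes \<sigma>. c < j"
proof -
  \<comment> \<open>the last position c < j with (c, j) a tree inversion is a global descent of \<sigma>\<close>
  define S where "S = {x. x < j \<and> (x, j) \<in> tree_Inv t}"
  have "a \<in> S" "finite S" using a tree_Inv_bounds by (auto simp: S_def)
  then have c: "Max S \<in> S" "\<And>x. x \<in> S \<Longrightarrow> x \<le> Max S" by (auto intro: Max_in)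
  let ?c = "Max S"
  have cj: "(?c, j) \<in> tree_Inv t" "?c < j" "1 \<le> ?c" "j \<le> n"
    using c(1) sub tree_Inv_bounds[of ?c j t] perms_length[OF \<sigma>] by (auto simp: S_def mem_Inv_iff)
  have "(x, y) \<in> Inv \<sigma>" if "1 \<le> x" "x \<le> ?c" "?c < y" "y \<le> n" for x y
  proof -
    have xj: "(x, j) \<in> tree_Inv t" using tree_Inv_left_closed[OF cj(1)] that by blast
    consider "y < j" | "y = j" | "j < y" by linarith
    then show ?thesis
    proof cases
      case 1
      have "y \<notin> S" using c(2) that by force
      with 1 have "(y, j) \<notin> tree_Inv t" by (simp add: S_def)
      with xj 1 that have "(x, y) \<in> tree_Inv t"
        using Inv_cotrans[of x j "gam t" y] by (auto simp: tree_Inv_def)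
      with sub show ?thesis by blast
    next
      case 2
      with xj sub show ?thesis by blast
    next
      case 3
      with j that cj show ?thesis by (auto simp: separated_pairs_def)
    qed
  qed
  then have "?c \<in> GDes \<sigma>"
    using mem_GDes_iff[OF \<sigma>] cj by (auto simp: separated_pairs_def)
  with cj show ?thesis by blast
qed

lemma tree_Inv_subset_rho:
  "\<sigma> \<in> perms n \<Longrightarrow> nodes t = n \<Longrightarrow> tree_Inv t \<subseteq> Inv \<sigma> \<Longrightarrow> tree_Inv t \<subseteq> tree_Inv (rho \<sigma>)"
proof (induction n arbitrary: \<sigma> t rule: less_induct)
  case (less n)
  show ?case
  proof (cases "n = 0")
    case True
    with less.prems show ?thesis using tree_Inv_bounds by fastforce
  next
    case False
    let ?j = "first_gdes \<sigma>"
    obtain A B where rho: "rho \<sigma> = Nd (rho A) (rho B)"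
      and A: "A \<in> perms (?j - 1)" "\<And>x y. (x, y) \<in> Inv A \<longleftrightarrow> (x, y) \<in> Inv \<sigma> \<and> y < ?j"
      and B: "B \<in> perms (n - ?j)" "\<And>x y. (x, y) \<in> Inv B \<longleftrightarrow> 1 \<le> x \<and> (x + ?j, y + ?j) \<in> Inv \<sigma>"
      and j: "1 \<le> ?j" "?j \<le> n"
      using rho_decomp[OF less.prems(1) False] by blast
    have nodes: "nodes (rho A) = ?j - 1" "nodes (rho B) = n - ?j"
      using nodes_rho A(1) B(1) by auto
    have "tree_Inv (prefix_tree (?j - 1) t) \<subseteq> Inv A"
      using less.prems(3) j by (auto simp: mem_tree_Inv_prefix_tree_iff A(2))
    then have left: "tree_Inv (prefix_tree (?j - 1) t) \<subseteq> tree_Inv (rho A)"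
      using less.IH[OF _ A(1), of "prefix_tree (?j - 1) t"] less.prems(2) j False by simp
    have "tree_Inv (suffix_tree ?j t) \<subseteq> Inv B"
      using less.prems(3) by (auto simp: mem_tree_Inv_suffix_tree_iff B(2))
    then have right: "tree_Inv (suffix_tree ?j t) \<subseteq> tree_Inv (rho B)"
      using less.IH[OF _ B(1), of "suffix_tree ?j t"] less.prems(2) j False by simp
    have "(x, ?j) \<notin> tree_Inv t" for x
      using GDes_below_tree_Inv_column[OF less.prems(1,3) separated_pairs_first_gdes[OF less.prems(1)]]
        first_gdes_le leD by blast
    with left right nodes j less.prems(2) show ?thesis
      unfolding rho by (intro tree_Inv_subset_Nd_of_prefix_suffix) auto
  qed
qed

lemma weak_le_gam_iff_tamari_le_rho:
  assumes "\<sigma> \<in> perms n" "nodes t = n"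
  shows "weak_le (gam t) \<sigma> \<longleftrightarrow> tamari_le t (rho \<sigma>)"
  using assms tree_Inv_rho_subset[OF assms(1)] tree_Inv_subset_rho[OF assms]
  by (auto simp: tamari_le_iff_tree_Inv_subset nodes_rho weak_le_def simp flip: tree_Inv_def)

section \<open>The maps Z and C\<close>

lemma idp_in_perms: "idp k \<in> perms k"
  by (simp add: idp_def perms_def atLeastLessThanSuc_atLeastAtMost del: upt_Suc)

lemma Inv_idp [simp]: "Inv (idp k) = {}"
  by (auto simp: idp_def mem_Inv_iff nth_upt simp del: upt_Suc)

definition block_sizes :: "nat \<Rightarrow> nat list \<Rightarrow> nat \<Rightarrow> nat list" where
  "block_sizes c ps n = map (\<lambda>(a, b). a - b) (zip (ps @ [n]) (c # ps))"

lemma block_sizes_Nil [simp]: "block_sizes c [] n = [n - c]"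
  by (simp add: block_sizes_def)

lemma block_sizes_Cons [simp]: "block_sizes c (p # ps) n = (p - c) # block_sizes p ps n"
  by (simp add: block_sizes_def)

lemma mem_separated_pairs_insert_iff:
  assumes cp: "c < p" "p < n" "\<forall>s\<in>S. p < s"
  shows "(i, j) \<in> separated_pairs ((\<lambda>s. s - c) ` insert p S) (n - c) \<longleftrightarrow>
    (1 \<le> i \<and> i \<le> p - c \<and> p - c < j \<and> j \<le> n - c) \<or>
    (p - c < i \<and> (i - (p - c), j - (p - c)) \<in> separated_pairs ((\<lambda>s. s - p) ` S) (n - p))"
  (is "?L \<longleftrightarrow> ?cross \<or> ?shifted")
proof
  assume ?L
  then obtain s where s: "s \<in> insert p S" "i \<le> s - c" "s - c < j"
    and ij: "1 \<le> i" "i < j" "j \<le> n - c"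
    by (auto simp: separated_pairs_def)
  have "p \<le> s" using s(1) cp by auto
  show "?cross \<or> ?shifted"
  proof (cases "i \<le> p - c")
    case True
    with s ij \<open>p \<le> s\<close> show ?thesis by auto
  next
    case False
    with s cp have "s \<in> S" "p < s" by auto
    with False s ij cp show ?thesis by (auto simp: separated_pairs_def intro!: bexI[of _ s])
  qed
next
  assume "?cross \<or> ?shifted"
  then show ?L
  proof
    assume ?shifted
    then obtain s where "s \<in> S" "i - (p - c) \<le> s - p" "s - p < j - (p - c)" "j - (p - c) \<le> n - p"
      "p - c < i"
      by (auto simp: separated_pairs_def)
    moreover from this have "p < s" using cp by blast
    ultimately show ?L using cp by (auto simp: separated_pairs_def intro!: bexI[of _ s])
  qed (auto simp: separated_pairs_def)
qed

lemma foldr_pbs_block_sizes: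
  assumes "sorted_wrt (<) (c # ps)" "\<forall>s\<in>set ps. s < n" "c \<le> n"
  shows "foldr pbs (map idp (block_sizes c ps n)) [] \<in> perms (n - c) \<and>
    Inv (foldr pbs (map idp (block_sizes c ps n)) []) = separated_pairs ((\<lambda>s. s - c) ` set ps) (n - c)"
  using assms
proof (induction ps arbitrary: c)
  case Nil
  then show ?case by (simp add: pbs_def idp_in_perms separated_pairs_def)
next
  case (Cons p ps)
  let ?Z = "foldr pbs (map idp (block_sizes p ps n)) []"
  have cp: "c < p" "p < n" "\<forall>s\<in>set ps. p < s" using Cons.prems by auto
  then have IH: "?Z \<in> perms (n - p)" "Inv ?Z = separated_pairs ((\<lambda>s. s - p) ` set ps) (n - p)"
    using Cons.IH Cons.prems by auto
  have n: "p - c + (n - p) = n - c" using cp by simp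
  have "pbs (idp (p - c)) ?Z \<in> perms (n - c)"
    using pbs_in_perms[OF idp_in_perms[of "p - c"] IH(1)] by (simp only: n)
  moreover have "(i, j) \<in> Inv (pbs (idp (p - c)) ?Z) \<longleftrightarrow>
    (i, j) \<in> separated_pairs ((\<lambda>s. s - c) ` set (p # ps)) (n - c)" for i j
    using mem_Inv_pbs_iff[OF idp_in_perms[of "p - c"] IH(1)] IH(2) mem_separated_pairs_insert_iff[OF cp]
    by (simp only: n Inv_idp empty_iff simp_thms list.set)
  ultimately show ?case by auto
qed

lemma Q_bounds: "S \<in> Q n \<Longrightarrow> s \<in> S \<Longrightarrow> 1 \<le> s \<and> s < n"
proof -
  assume "S \<in> Q n" "s \<in> S"
  then have "s \<in> {1..n - 1}" by (auto simp: Q_def)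
  then show ?thesis by auto
qed

lemma Z_in_perms_and_Inv:
  assumes "S \<in> Q n"
  shows "Z n S \<in> perms n \<and> Inv (Z n S) = separated_pairs S n"
proof -
  have S: "finite S" "\<forall>s\<in>S. 1 \<le> s \<and> s < n"
    using assms Q_bounds by (auto simp: Q_def intro: finite_subset)
  then have "sorted_wrt (<) (0 # sorted_list_of_set S)" "\<forall>s\<in>S. s < n"
    by (auto simp: strict_sorted_list_of_set)
  moreover have "blocks n S = block_sizes 0 (sorted_list_of_set S) n"
    by (simp add: blocks_def block_sizes_def Let_def)
  ultimately show ?thesis
    using foldr_pbs_block_sizes[of 0 "sorted_list_of_set S" n] S(1) by (simp add: Z_def)
qed

lemma Z_in_perms: "S \<in> Q n \<Longrightarrow> Z n S \<in> perms n"
  using Z_in_perms_and_Inv by blast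

lemma Inv_Z: "S \<in> Q n \<Longrightarrow> Inv (Z n S) = separated_pairs S n"
  using Z_in_perms_and_Inv by blast

lemma mem_Des_iff: "i \<in> Des \<sigma> \<longleftrightarrow> (i, i + 1) \<in> Inv \<sigma>"
  by (auto simp: Des_def mem_Inv_iff)

lemma Inv_has_descent: "(i, j) \<in> Inv \<sigma> \<Longrightarrow> \<exists>k. i \<le> k \<and> k < j \<and> (k, k + 1) \<in> Inv \<sigma>"
proof (induction j arbitrary: i)
  case (Suc j)
  show ?case
  proof (cases "(j, j + 1) \<in> Inv \<sigma> \<or> i = j")
    case True
    with Suc.prems show ?thesis by (intro exI[of _ j]) (auto simp: mem_Inv_iff)
  next
    case False
    with Suc.prems have "(i, j) \<in> Inv \<sigma>" by (auto simp: mem_Inv_iff)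
    with Suc.IH show ?thesis by force
  qed
qed (simp add: mem_Inv_iff)

lemma Des_subset_iff_weak_le_Z:
  assumes "\<sigma> \<in> perms n" "S \<in> Q n"
  shows "Des \<sigma> \<subseteq> S \<longleftrightarrow> weak_le \<sigma> (Z n S)"
proof -
  have "Inv \<sigma> \<subseteq> separated_pairs S n" if "Des \<sigma> \<subseteq> S"
  proof clarify
    fix i j assume "(i, j) \<in> Inv \<sigma>"
    moreover obtain k where "i \<le> k" "k < j" "(k, k + 1) \<in> Inv \<sigma>"
      using Inv_has_descent[OF \<open>(i, j) \<in> Inv \<sigma>\<close>] by blast
    moreover from this have "k \<in> S" using that by (auto simp: mem_Des_iff)
    ultimately show "(i, j) \<in> separated_pairs S n"
      using perms_length[OF assms(1)] by (auto simp: separated_pairs_def mem_Inv_iff)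
  qed
  moreover have "Des \<sigma> \<subseteq> S" if "Inv \<sigma> \<subseteq> separated_pairs S n"
  proof
    fix i assume "i \<in> Des \<sigma>"
    with that have "(i, i + 1) \<in> separated_pairs S n" by (auto simp: mem_Des_iff)
    then obtain s where "s \<in> S" "i \<le> s" "s < i + 1" by (auto simp: separated_pairs_def)
    then show "i \<in> S" by (metis le_antisym less_Suc_eq_le Suc_eq_plus1)
  qed
  ultimately show ?thesis
    unfolding weak_le_def Inv_Z[OF assms(2)] by blast
qed

lemma weak_le_Z_iff_subset_GDes:
  assumes "\<sigma> \<in> perms n" "S \<in> Q n"
  shows "weak_le (Z n S) \<sigma> \<longleftrightarrow> S \<subseteq> GDes \<sigma>"
proof -
  have "separated_pairs S n = (\<Union>s\<in>S. separated_pairs {s} n)"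
    by (auto simp: separated_pairs_def)
  moreover have "s \<in> S \<Longrightarrow> 1 \<le> s \<and> s < n" for s
    using Q_bounds[OF assms(2)] by blast
  ultimately show ?thesis
    unfolding weak_le_def Inv_Z[OF assms(2)] mem_GDes_iff[OF assms(1)] subset_iff[of S] by blast
qed

lemma gam_tbs: "gam (tbs s t) = pbs (gam s) (gam t)"
  by (induction s) (simp_all add: pvee_def pbs_def)

lemma gam_one: "gam (one k) = idp k"
  by (induction k) (simp_all add: idp_def pvee_def)

lemma gam_C: "gam (C n S) = Z n S"
proof -
  have "gam (foldr tbs (map one bs) Lf) = foldr pbs (map idp bs) []" for bs
    by (induction bs) (simp_all add: gam_tbs gam_one)
  then show ?thesis by (simp add: C_def Z_def)
qed

lemma nodes_C: "S \<in> Q n \<Longrightarrow> nodes (C n S) = n"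
  using length_gam[of "C n S"] gam_C perms_length Z_in_perms by metis

section \<open>The maps L and R\<close>

lemma length_leafdirs [simp]: "length (leafdirs b t) = nodes t + 1"
  by (induction t arbitrary: b) auto

lemma leafdirs_first: "t \<noteq> Lf \<Longrightarrow> leafdirs b t ! 0"
proof (induction t arbitrary: b)
  case (Nd l r)
  then show ?case by (cases "l = Lf") (auto simp: nth_append)
qed simp

lemma leafdirs_last: "t \<noteq> Lf \<Longrightarrow> \<not> leafdirs b t ! nodes t"
proof (induction t arbitrary: b)
  case (Nd l r)
  then show ?case by (cases "r = Lf") (auto simp: nth_append)
qed simp

lemma leafdirs_nth_iff:
  "1 \<le> i \<Longrightarrow> i < nodes t \<Longrightarrow> leafdirs b t ! i \<longleftrightarrow> (i, i + 1) \<in> tree_Inv t"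
proof (induction t arbitrary: b i)
  case (Nd l r)
  let ?p = "nodes l"
  consider "i < ?p" | "i = ?p" | "i = ?p + 1" | "?p + 1 < i" by linarith
  then show ?case
  proof cases
    case 1
    with Nd show ?thesis by (simp add: nth_append mem_tree_Inv_Nd_left_iff)
  next
    case 2
    with Nd.prems have "l \<noteq> Lf" by auto
    with 2 leafdirs_last[of l True] tree_Inv_Nd_root[of i l r] show ?thesis
      by (simp add: nth_append)
  next
    case 3
    with Nd.prems have "r \<noteq> Lf" by auto
    with 3 Nd.prems leafdirs_first[of r False] show ?thesis
      by (auto simp: nth_append mem_tree_Inv_Nd_iff)
  next
    case 4
    with Nd.prems Nd.IH(2)[of "i - (?p + 1)" False]
      mem_tree_Inv_Nd_right_iff[of "i - (?p + 1)" l "i - ?p" r]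
    show ?thesis by (simp add: nth_append Suc_diff_Suc)
  qed
qed simp

lemma L_eq_Des_gam: "L t = Des (gam t)"
  using leafdirs_nth_iff[of _ t False]
  by (auto simp: L_def mem_Des_iff tree_Inv_def mem_Inv_iff)

lemma nodes_tbs [simp]: "nodes (tbs r r') = nodes r + nodes r'"
  by (induction r) auto

lemma tbs_split_iff_separated:
  assumes "1 \<le> j" "j < nodes t"
  shows "(\<exists>r r'. nodes r = j \<and> t = tbs r r') \<longleftrightarrow> separated_pairs {j} (nodes t) \<subseteq> tree_Inv t"
proof
  assume "\<exists>r r'. nodes r = j \<and> t = tbs r r'"
  then obtain r r' where "nodes r = j" "t = tbs r r'" by blast
  then show "separated_pairs {j} (nodes t) \<subseteq> tree_Inv t"
    using mem_Inv_pbs_iff[OF gam_in_perms[of r] gam_in_perms[of r']]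
    by (auto simp: tree_Inv_def gam_tbs separated_pairs_def)
next
  assume "separated_pairs {j} (nodes t) \<subseteq> tree_Inv t"
  with assms show "\<exists>r r'. nodes r = j \<and> t = tbs r r'"
  proof (induction t arbitrary: j)
    case (Nd l r0)
    let ?p = "nodes l"
    consider "j \<le> ?p" | "j = ?p + 1" | "?p + 1 < j" by linarith
    then show ?case
    proof cases
      case 1
      with Nd.prems have "(j, ?p + 1) \<in> tree_Inv (Nd l r0)"
        by (auto simp: separated_pairs_def)
      with tree_Inv_Nd_root show ?thesis by blast
    next
      case 2
      then show ?thesis by (intro exI[of _ "Nd l Lf"] exI[of _ r0]) simp
    next
      case 3
      let ?j = "j - (?p + 1)"
      have "separated_pairs {?j} (nodes r0) \<subseteq> tree_Inv r0"
      proof clarify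
        fix x y
        assume "(x, y) \<in> separated_pairs {?j} (nodes r0)"
        with 3 Nd.prems(3) have "(x + (?p + 1), y + (?p + 1)) \<in> tree_Inv (Nd l r0)" "1 \<le> x"
          by (auto simp: separated_pairs_def)
        then show "(x, y) \<in> tree_Inv r0" using mem_tree_Inv_Nd_right_iff[of x l y r0] by blast
      qed
      moreover have "1 \<le> ?j" "?j < nodes r0" using 3 Nd.prems(2) by auto
      ultimately obtain r1 r' where "nodes r1 = ?j" "r0 = tbs r1 r'"
        using Nd.IH(2) by blast
      with 3 show ?thesis by (intro exI[of _ "Nd l r1"] exI[of _ r']) auto
    qed
  qed simp
qed

lemma R_eq_GDes_gam: "R t = GDes (gam t)"
proof -
  have "j \<in> R t \<longleftrightarrow> j \<in> GDes (gam t)" for j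
    using tbs_split_iff_separated[of j t] mem_GDes_iff[OF gam_in_perms[of t], of j]
    unfolding R_def tree_Inv_def by blast
  then show ?thesis by blast
qed

section \<open>Galois connections\<close>

definition galois_conn ::
  "'a set \<Rightarrow> ('a \<Rightarrow> 'a \<Rightarrow> bool) \<Rightarrow> 'b set \<Rightarrow> ('b \<Rightarrow> 'b \<Rightarrow> bool) \<Rightarrow> ('a \<Rightarrow> 'b) \<Rightarrow> ('b \<Rightarrow> 'a) \<Rightarrow> bool"
  where "galois_conn A le_A B le_B f g \<longleftrightarrow>
    f ` A \<subseteq> B \<and> g ` B \<subseteq> A \<and> (\<forall>x\<in>A. \<forall>y\<in>B. le_B (f x) y \<longleftrightarrow> le_A x (g y))"

lemma galois_connD:
  assumes "galois_conn A le_A B le_B f g"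
  shows "\<forall>x\<in>A. f x \<in> B" "\<forall>y\<in>B. g y \<in> A" "\<forall>x\<in>A. \<forall>y\<in>B. le_B (f x) y \<longleftrightarrow> le_A x (g y)"
  using assms by (auto simp: galois_conn_def)

lemma galois_conn_mono:
  assumes gc: "galois_conn A le_A B le_B f g"
    and A: "reflp le_A" "transp le_A" and B: "reflp le_B" "transp le_B"
  shows "\<forall>x\<in>A. \<forall>x'\<in>A. le_A x x' \<longrightarrow> le_B (f x) (f x')"
    and "\<forall>y\<in>B. \<forall>y'\<in>B. le_B y y' \<longrightarrow> le_A (g y) (g y')"
proof -
  show "\<forall>x\<in>A. \<forall>x'\<in>A. le_A x x' \<longrightarrow> le_B (f x) (f x')"
  proof (intro ballI impI)
    fix x x' assume x: "x \<in> A" "x' \<in> A" "le_A x x'"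
    with gc have fx': "f x' \<in> B" by (auto simp: galois_conn_def)
    with gc x(2) reflpD[OF B(1)] have "le_A x' (g (f x'))" unfolding galois_conn_def by blast
    with transpD[OF A(2)] x(3) have "le_A x (g (f x'))" by blast
    with gc x(1) fx' show "le_B (f x) (f x')" unfolding galois_conn_def by blast
  qed
  show "\<forall>y\<in>B. \<forall>y'\<in>B. le_B y y' \<longrightarrow> le_A (g y) (g y')"
  proof (intro ballI impI)
    fix y y' assume y: "y \<in> B" "y' \<in> B" "le_B y y'"
    with gc have gy: "g y \<in> A" by (auto simp: galois_conn_def)
    with gc y(1) reflpD[OF A(1)] have "le_B (f (g y)) y" unfolding galois_conn_def by blast
    with transpD[OF B(2)] y(3) have "le_B (f (g y)) y'" by blast
    with gc y(2) gy show "le_A (g y) (g y')" unfolding galois_conn_def by blast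
  qed
qed

lemma galois_conn_comp:
  "galois_conn A le_A B le_B f g \<Longrightarrow> galois_conn B le_B D le_D f' g' \<Longrightarrow>
    galois_conn A le_A D le_D (f' \<circ> f) (g \<circ> g')"
  by (auto simp: galois_conn_def image_subset_iff)

lemma galois_conn_left_unique:
  assumes "galois_conn A le_A B le_B f g" "galois_conn A le_A B le_B f' g'"
    and "\<forall>y\<in>B. g y = g' y" "reflp le_B" "antisymp le_B" "x \<in> A"
  shows "f x = f' x"
  using assms reflpD[OF assms(4), of "f x"] reflpD[OF assms(4), of "f' x"]
  by (auto simp: galois_conn_def image_subset_iff intro: antisympD[OF assms(5)])

lemma galois_conn_right_unique:
  assumes "galois_conn A le_A B le_B f g" "galois_conn A le_A B le_B f' g'"
    and "\<forall>x\<in>A. f x = f' x" "reflp le_A" "antisymp le_A" "y \<in> B"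
  shows "g y = g' y"
  using assms reflpD[OF assms(4), of "g y"] reflpD[OF assms(4), of "g' y"]
  by (auto simp: galois_conn_def image_subset_iff intro: antisympD[OF assms(5)])

lemma reflp_tamari_le: "reflp tamari_le"
  by (simp add: reflpI)

lemma transp_tamari_le: "transp tamari_le"
  using tamari_le_trans by (blast intro: transpI)

lemma reflp_weak_le: "reflp weak_le"
  by (simp add: reflpI weak_le_def)

lemma transp_weak_le: "transp weak_le"
  by (auto simp: transp_def weak_le_def)

lemma tamari_le_iff_weak_le_gam:
  "nodes s = nodes t \<Longrightarrow> tamari_le s t \<longleftrightarrow> weak_le (gam s) (gam t)"
  by (simp add: tamari_le_iff_tree_Inv_subset weak_le_def tree_Inv_def)

lemma Des_in_Q: "\<sigma> \<in> perms n \<Longrightarrow> Des \<sigma> \<in> Q n"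
  by (auto simp: Des_def Q_def perms_length)

lemma GDes_in_Q: "\<sigma> \<in> perms n \<Longrightarrow> GDes \<sigma> \<in> Q n"
  by (auto simp: GDes_def Q_def perms_length)

lemma galois_conn_lam_gam: "galois_conn (perms n) weak_le (Y n) tamari_le lam gam"
  by (auto simp: galois_conn_def Y_def nodes_lam tamari_le_lam_iff gam_in_perms)

lemma galois_conn_gam_rho: "galois_conn (Y n) tamari_le (perms n) weak_le gam rho"
  by (auto simp: galois_conn_def Y_def nodes_rho weak_le_gam_iff_tamari_le_rho gam_in_perms)

lemma galois_conn_Des_Z: "galois_conn (perms n) weak_le (Q n) (\<subseteq>) Des (Z n)"
  by (auto simp: galois_conn_def Des_in_Q Z_in_perms Des_subset_iff_weak_le_Z)

lemma galois_conn_Z_GDes: "galois_conn (Q n) (\<subseteq>) (perms n) weak_le (Z n) GDes"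
  by (auto simp: galois_conn_def GDes_in_Q Z_in_perms weak_le_Z_iff_subset_GDes)

lemma galois_conn_L_C: "galois_conn (Y n) tamari_le (Q n) (\<subseteq>) L (C n)"
proof -
  have "L t \<subseteq> S \<longleftrightarrow> tamari_le t (C n S)" if "nodes t = n" "S \<in> Q n" for t S
    using that Des_subset_iff_weak_le_Z[OF gam_in_perms[of t]] tamari_le_iff_weak_le_gam[of t "C n S"]
    by (simp add: L_eq_Des_gam gam_C nodes_C)
  then show ?thesis
    using Des_in_Q[OF gam_in_perms] by (auto simp: galois_conn_def Y_def nodes_C L_eq_Des_gam)
qed

lemma galois_conn_C_R: "galois_conn (Q n) (\<subseteq>) (Y n) tamari_le (C n) R"
proof -
  have "tamari_le (C n S) t \<longleftrightarrow> S \<subseteq> R t" if "nodes t = n" "S \<in> Q n" for t S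
    using that weak_le_Z_iff_subset_GDes[OF gam_in_perms[of t]] tamari_le_iff_weak_le_gam[of "C n S" t]
    by (simp add: R_eq_GDes_gam gam_C nodes_C)
  then show ?thesis
    using GDes_in_Q[OF gam_in_perms] by (auto simp: galois_conn_def Y_def nodes_C R_eq_GDes_gam)
qed

theorem theorem2p1:
  fixes n :: nat
  shows
  \<comment> \<open>the maps have the stated domains and codomains\<close>
  "(\<forall>t\<in>Y n. L t \<in> Q n \<and> R t \<in> Q n \<and> gam t \<in> perms n) \<and>
   (\<forall>S\<in>Q n. C n S \<in> Y n \<and> Z n S \<in> perms n) \<and>
   (\<forall>\<sigma>\<in>perms n. lam \<sigma> \<in> Y n \<and> rho \<sigma> \<in> Y n \<and> Des \<sigma> \<in> Q n \<and> GDes \<sigma> \<in> Q n) \<and>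
   \<comment> \<open>order preservation\<close>
   (\<forall>s\<in>Y n. \<forall>t\<in>Y n. tamari_le s t \<longrightarrow>
        L s \<subseteq> L t \<and> R s \<subseteq> R t \<and> weak_le (gam s) (gam t)) \<and>
   (\<forall>S\<in>Q n. \<forall>T\<in>Q n. S \<subseteq> T \<longrightarrow> tamari_le (C n S) (C n T) \<and> weak_le (Z n S) (Z n T)) \<and>
   (\<forall>\<sigma>\<in>perms n. \<forall>\<tau>\<in>perms n. weak_le \<sigma> \<tau> \<longrightarrow>
        tamari_le (lam \<sigma>) (lam \<tau>) \<and> tamari_le (rho \<sigma>) (rho \<tau>) \<and>
        Des \<sigma> \<subseteq> Des \<tau> \<and> GDes \<sigma> \<subseteq> GDes \<tau>) \<and>
   \<comment> \<open>compositions\<close>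
   (\<forall>\<sigma>\<in>perms n. L (lam \<sigma>) = Des \<sigma> \<and> R (rho \<sigma>) = GDes \<sigma>) \<and>
   (\<forall>S\<in>Q n. gam (C n S) = Z n S) \<and>
   \<comment> \<open>Galois connections\<close>
   (\<forall>\<sigma>\<in>perms n. \<forall>t\<in>Y n. tamari_le (lam \<sigma>) t \<longleftrightarrow> weak_le \<sigma> (gam t)) \<and>
   (\<forall>t\<in>Y n. \<forall>S\<in>Q n. L t \<subseteq> S \<longleftrightarrow> tamari_le t (C n S)) \<and>
   (\<forall>\<sigma>\<in>perms n. \<forall>S\<in>Q n. Des \<sigma> \<subseteq> S \<longleftrightarrow> weak_le \<sigma> (Z n S)) \<and>
   (\<forall>t\<in>Y n. \<forall>\<sigma>\<in>perms n. weak_le (gam t) \<sigma> \<longleftrightarrow> tamari_le t (rho \<sigma>)) \<and>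
   (\<forall>S\<in>Q n. \<forall>t\<in>Y n. tamari_le (C n S) t \<longleftrightarrow> S \<subseteq> R t) \<and>
   (\<forall>S\<in>Q n. \<forall>\<sigma>\<in>perms n. weak_le (Z n S) \<sigma> \<longleftrightarrow> S \<subseteq> GDes \<sigma>)"
proof -
  note gc = galois_conn_lam_gam[of n] galois_conn_gam_rho[of n] galois_conn_Des_Z[of n]
    galois_conn_Z_GDes[of n] galois_conn_L_C[of n] galois_conn_C_R[of n]
  note preorder = reflp_tamari_le transp_tamari_le reflp_weak_le transp_weak_le
  have subset_preorder: "reflp ((\<subseteq>) :: nat set \<Rightarrow> _)" "transp ((\<subseteq>) :: nat set \<Rightarrow> _)"
    by (auto intro: reflpI transpI)
  note adjoint = gc[THEN galois_connD(1)] gc[THEN galois_connD(2)] gc[THEN galois_connD(3)]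
  note order_preserving =
    galois_conn_mono[OF gc(1) preorder(3,4,1,2)] galois_conn_mono[OF gc(2) preorder]
    galois_conn_mono[OF gc(3) preorder(3,4) subset_preorder]
    galois_conn_mono[OF gc(4) subset_preorder preorder(3,4)]
    galois_conn_mono[OF gc(5) preorder(1,2) subset_preorder]
    galois_conn_mono[OF gc(6) subset_preorder preorder(1,2)]
  \<comment> \<open>L o lam and Des are both left adjoint to gam o C = Z\<close>
  have "\<forall>\<sigma>\<in>perms n. L (lam \<sigma>) = Des \<sigma>"
    using galois_conn_left_unique[OF galois_conn_comp[OF gc(1,5)] gc(3) _ subset_preorder(1)] gam_C
    by simp
  \<comment> \<open>R o rho and GDes are both right adjoint to gam o C = Z\<close>
  have "\<forall>\<sigma>\<in>perms n. R (rho \<sigma>) = GDes \<sigma>"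
    using galois_conn_right_unique[OF galois_conn_comp[OF gc(6,2)] gc(4) _ subset_preorder(1)] gam_C
    by simp
  have "\<forall>S\<in>Q n. gam (C n S) = Z n S" by (simp add: gam_C)
  show ?thesis
    unfolding imp_conjR ball_conj_distrib by (intro conjI; fact)
qed

end
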